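(* Assume the Morris–Sinclair mixing bound: for every $\alpha>0$ there is a constant $C_\alpha$ such that for all $n$, $\vec a$, $b$, the chain $P_{\rm Kna}$ satisfies $\tau(1/4)\le C_\alpha n^{9/2+\alpha}$. Then for every $\alpha>0$ there is a constant $C'_\alpha$ such that, for the SRT router model and for the billiard router model corresponding to $P_{\rm Kna}$ (for any $n,\vec a,b$ and any initial configuration), $\left|\chi^{(T)}_w-\mu^{(T)}_w\right|\le C'_\alpha n^{11/2+\alpha}$ for all $w\in\Omega_{\rm Kna}$ and $T\ge0$.
   Context: Given $\vec a\in\mathbb{Z}_{>0}^n$ and $b\in\mathbb{Z}_{>0}$, $\Omega_{\rm Kna}=\{\vec x\in\{0,1\}^n:\sum_i a_ix_i\le b\}$, $\mathcal N_{\rm Kna}(\vec x)=\{\vec y\in\Omega_{\rm Kna}:\|\vec x-\vec y\|_1=1\}$, and $P_{\rm Kna}(\vec x,\vec y)=1/(2n)$ if $\vec y\in\mathcal N_{\rm Kna}(\vec x)$, $1-|\mathcal N_{\rm Kna}(\vec x)|/(2n)$ if $\vec y=\vec x$, and $0$ otherwise; it is symmetric, ergodic, with uniform stationary distribution. For a stochastic matrix $P$ on a finite set $V$ with stationary distribution $\pi$: $\mathcal N(v)=\{u:P_{v,u}>0\}$; $d_{TV}(\xi,\zeta)=\frac12\|\xi-\zeta\|_1$; $\tau(\varepsilon)=\max_v\min\{t\ge0:d_{TV}(P^t_{v,\cdot},\pi)\le\varepsilon\}$. A functional-router model consists of $\sigma_v:\mathbb{Z}_{\ge0}\to\mathcal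 N(v)$; $I_{v,u}[z,z')=|\{j\in\{z,\dots,z'-1\}:\sigma_v(j)=u\}|$; given $\chi^{(0)}\in\mathbb{Z}_{\ge0}^V$, $Z^{(t)}_{v,u}=I_{v,u}\big[\sum_{s<t}\chi^{(s)}_v,\sum_{s\le t}\chi^{(s)}_v\big)$, $\chi^{(t+1)}_u=\sum_vZ^{(t)}_{v,u}$, $\mu^{(t)}=\chi^{(0)}P^t$. SRT router: with $T_i(v)=\{u\in\mathcal N(v):I_{v,u}[0,i)-(i+1)P_{v,u}<0\}$, $\sigma_v(i)$ is some $u\in T_i(v)$ minimizing $(I_{v,u}[0,i)+1)/P_{v,u}$. Billiard router: $\sigma_v(i)$ is some $u\in\mathcal N(v)$ minimizing $(I_{v,u}[0,i)+1)/P_{v,u}$. (Known: for the SRT router $|I_{v,u}[0,z)-zP_{v,u}|<1$ for all $z>0$; for the billiard router $|I_{v,u}[z,z')-(z'-z)P_{v,u}|\le1+(|\mathcal N(v)|-2)P_{v,u}$ for $z'>z$.) *)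

theory Defs
  imports Complex_Main
begin

definition nbr :: "'v set \<Rightarrow> ('v \<Rightarrow> 'v \<Rightarrow> real) \<Rightarrow> 'v \<Rightarrow> 'v set" where
  "nbr V P v = {u \<in> V. P v u > 0}"

fun mpow :: "'v set \<Rightarrow> ('v \<Rightarrow> 'v \<Rightarrow> real) \<Rightarrow> nat \<Rightarrow> 'v \<Rightarrow> 'v \<Rightarrow> real" where
  "mpow V P 0 v u = (if u = v then 1 else 0)"
| "mpow V P (Suc t) v u = (\<Sum>w\<in>V. mpow V P t v w * P w u)"

definition dtv :: "'v set \<Rightarrow> ('v \<Rightarrow> real) \<Rightarrow> ('v \<Rightarrow> real) \<Rightarrow> real" where
  "dtv V \<xi> \<zeta> = (1/2) * (\<Sum>v\<in>V. \<bar>\<xi> v - \<zeta> v\<bar>)"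

definition mixing_time :: "'v set \<Rightarrow> ('v \<Rightarrow> 'v \<Rightarrow> real) \<Rightarrow> ('v \<Rightarrow> real) \<Rightarrow> real \<Rightarrow> nat" where
  "mixing_time V P \<pi> \<epsilon> = Max ((\<lambda>v. LEAST t. dtv V (mpow V P t v) \<pi> \<le> \<epsilon>) ` V)"

definition Icount :: "('v \<Rightarrow> nat \<Rightarrow> 'v) \<Rightarrow> 'v \<Rightarrow> 'v \<Rightarrow> nat \<Rightarrow> nat \<Rightarrow> nat" where
  "Icount \<sigma> v u z z' = card {j \<in> {z..<z'}. \<sigma> v j = u}"

text \<open>router_state t = (chi^(t), S^(t)) where S^(t)_v = sum_{s<t} chi^(s)_v.\<close>
fun router_state :: "'v set \<Rightarrow> ('v \<Rightarrow> nat \<Rightarrow> 'v) \<Rightarrow> ('v \<Rightarrow> nat) \<Rightarrow> nat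
      \<Rightarrow> ('v \<Rightarrow> nat) \<times> ('v \<Rightarrow> nat)" where
  "router_state V \<sigma> \<chi>0 0 = (\<chi>0, (\<lambda>_. 0))"
| "router_state V \<sigma> \<chi>0 (Suc t) =
     (let (c, S) = router_state V \<sigma> \<chi>0 t
      in ((\<lambda>u. \<Sum>v\<in>V. Icount \<sigma> v u (S v) (S v + c v)), (\<lambda>v. S v + c v)))"

definition chi :: "'v set \<Rightarrow> ('v \<Rightarrow> nat \<Rightarrow> 'v) \<Rightarrow> ('v \<Rightarrow> nat) \<Rightarrow> nat \<Rightarrow> 'v \<Rightarrow> nat" where
  "chi V \<sigma> \<chi>0 t = fst (router_state V \<sigma> \<chi>0 t)"

definition mu :: "'v set \<Rightarrow> ('v \<Rightarrow> 'v \<Rightarrow> real) \<Rightarrow> ('v \<Rightarrow> nat) \<Rightarrow> nat \<Rightarrow> 'v \<Rightarrow> real" where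
  "mu V P \<chi>0 t w = (\<Sum>v\<in>V. real (\<chi>0 v) * mpow V P t v w)"

definition srt_T :: "'v set \<Rightarrow> ('v \<Rightarrow> 'v \<Rightarrow> real) \<Rightarrow> ('v \<Rightarrow> nat \<Rightarrow> 'v) \<Rightarrow> 'v \<Rightarrow> nat \<Rightarrow> 'v set" where
  "srt_T V P \<sigma> v i = {u \<in> nbr V P v. real (Icount \<sigma> v u 0 i) - real (i + 1) * P v u < 0}"

definition is_srt_router :: "'v set \<Rightarrow> ('v \<Rightarrow> 'v \<Rightarrow> real) \<Rightarrow> ('v \<Rightarrow> nat \<Rightarrow> 'v) \<Rightarrow> bool" where
  "is_srt_router V P \<sigma> \<longleftrightarrow>
     (\<forall>v\<in>V. \<forall>i. \<sigma> v i \<in> srt_T V P \<sigma> v i \<and>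
        (\<forall>u\<in>srt_T V P \<sigma> v i.
           (real (Icount \<sigma> v (\<sigma> v i) 0 i) + 1) / P v (\<sigma> v i)
             \<le> (real (Icount \<sigma> v u 0 i) + 1) / P v u))"

definition is_billiard_router :: "'v set \<Rightarrow> ('v \<Rightarrow> 'v \<Rightarrow> real) \<Rightarrow> ('v \<Rightarrow> nat \<Rightarrow> 'v) \<Rightarrow> bool" where
  "is_billiard_router V P \<sigma> \<longleftrightarrow>
     (\<forall>v\<in>V. \<forall>i. \<sigma> v i \<in> nbr V P v \<and>
        (\<forall>u\<in>nbr V P v.
           (real (Icount \<sigma> v (\<sigma> v i) 0 i) + 1) / P v (\<sigma> v i)
             \<le> (real (Icount \<sigma> v u 0 i) + 1) / P v u))"

text \<open>Vectors in {0,1}^n are lists of length n with entries in {0,1};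
  a is given by its entries a 0, ..., a (n-1).\<close>
definition kna_space :: "nat \<Rightarrow> (nat \<Rightarrow> nat) \<Rightarrow> nat \<Rightarrow> nat list set" where
  "kna_space n a b = {x. length x = n \<and> set x \<subseteq> {0, 1} \<and> (\<Sum>i<n. a i * x ! i) \<le> b}"

definition kna_nbr :: "nat \<Rightarrow> (nat \<Rightarrow> nat) \<Rightarrow> nat \<Rightarrow> nat list \<Rightarrow> nat list set" where
  "kna_nbr n a b x = {y \<in> kna_space n a b. (\<Sum>i<n. \<bar>real (x ! i) - real (y ! i)\<bar>) = 1}"

definition P_kna :: "nat \<Rightarrow> (nat \<Rightarrow> nat) \<Rightarrow> nat \<Rightarrow> nat list \<Rightarrow> nat list \<Rightarrow> real" where
  "P_kna n a b x y =
     (if y \<in> kna_nbr n a b x then 1 / (2 * real n)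
      else if y = x then 1 - real (card (kna_nbr n a b x)) / (2 * real n)
      else 0)"

end

theory Submission
  imports Defs
begin

text \<open>Let \<open>D v u z = I_{v,u}[0,z) - z P(v,u)\<close> be the discrepancy of the router at \<open>v\<close> and
  \<open>S_t(v)\<close> the number of tokens that have left \<open>v\<close> before step \<open>t\<close>. Comparing each routing step
  with one step of the walk and propagating the difference by \<open>P^(T-t-1)\<close> gives
  \<open>\<chi>_T(w) - \<mu>_T(w) = \<Sum>_{v,u} \<Sum>_{t<T} (D v u (S_{t+1}(v)) - D v u (S_t(v))) P^(T-t-1)(u,w)\<close>.
  Summation by parts bounds this by \<open>max |D|\<close> times the total variation of \<open>k \<mapsto> P^k(u,w)\<close>;
  as \<open>P\<close> is symmetric, that variation is at most \<open>\<Sum>_k 2 |P^k(w,-) - \<pi>|_1 = O(\<tau>(1/4))\<close>, because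
  the distance to \<open>\<pi>\<close> halves every \<open>\<tau>(1/4) + 1\<close> steps. Both routers keep
  \<open>|D v u z| \<le> 1 + |\<N>(v)| P(v,u)\<close>, and in the knapsack chain these bounds, summed over the
  in-neighbours \<open>v\<close> of \<open>u\<close>, are \<open>O(n)\<close>. Hence the discrepancy is \<open>O(n \<tau>(1/4)) = O(n^(11/2+\<alpha>))\<close>.\<close>

section \<open>Powers of a symmetric stochastic matrix\<close>

lemma mpow_Suc_left:
  assumes "finite V" "v \<in> V" "u \<in> V"
  shows "mpow V P (Suc t) v u = (\<Sum>w\<in>V. P v w * mpow V P t w u)"
  using assms
proof (induction t arbitrary: u)
  case 0
  have "(\<Sum>w\<in>V. P v w * mpow V P 0 w u) = (\<Sum>w\<in>V. if w = u then P v u else 0)"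
    by (rule sum.cong) auto
  moreover have "(\<Sum>w\<in>V. mpow V P 0 v w * P w u) = (\<Sum>w\<in>V. if w = v then P v u else 0)"
    by (rule sum.cong) auto
  ultimately show ?case using 0 by (simp add: sum.delta')
next
  case (Suc t)
  have "mpow V P (Suc (Suc t)) v u = (\<Sum>w\<in>V. (\<Sum>x\<in>V. P v x * mpow V P t x w) * P w u)"
    using Suc by (simp del: mpow.simps(2) add: mpow.simps(2)[of V P "Suc t"])
  also have "\<dots> = (\<Sum>x\<in>V. P v x * (\<Sum>w\<in>V. mpow V P t x w * P w u))"
    by (simp add: sum_distrib_left sum_distrib_right mult.assoc) (rule sum.swap)
  finally show ?case by simp
qed

locale sym_stochastic =
  fixes V :: "'v set" and P :: "'v \<Rightarrow> 'v \<Rightarrow> real"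
  assumes finite_V: "finite V"
    and P_nonneg: "\<And>v u. v \<in> V \<Longrightarrow> u \<in> V \<Longrightarrow> P v u \<ge> 0"
    and P_row_sum: "\<And>v. v \<in> V \<Longrightarrow> (\<Sum>u\<in>V. P v u) = 1"
    and P_sym: "\<And>v u. v \<in> V \<Longrightarrow> u \<in> V \<Longrightarrow> P v u = P u v"
begin

abbreviation Q where "Q \<equiv> mpow V P"

lemma mpow_nonneg: "v \<in> V \<Longrightarrow> u \<in> V \<Longrightarrow> Q t v u \<ge> 0"
  by (induction t arbitrary: u) (auto intro!: sum_nonneg mult_nonneg_nonneg P_nonneg)

lemma mpow_row_sum: "v \<in> V \<Longrightarrow> (\<Sum>u\<in>V. Q t v u) = 1"
proof (induction t)
  case 0 thus ?case using finite_V by simp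
next
  case (Suc t)
  have "(\<Sum>u\<in>V. Q (Suc t) v u) = (\<Sum>w\<in>V. Q t v w * (\<Sum>u\<in>V. P w u))"
    by (simp add: sum_distrib_left) (rule sum.swap)
  also have "\<dots> = (\<Sum>w\<in>V. Q t v w)" by (intro sum.cong) (auto simp: P_row_sum)
  finally show ?case using Suc by simp
qed

lemma mpow_sym: "v \<in> V \<Longrightarrow> u \<in> V \<Longrightarrow> Q t v u = Q t u v"
proof (induction t arbitrary: v u)
  case (Suc t)
  have "Q (Suc t) v u = (\<Sum>w\<in>V. Q t v w * P w u)" by simp
  also have "\<dots> = (\<Sum>w\<in>V. P u w * Q t w v)"
    using Suc by (intro sum.cong) (auto simp: P_sym mult.commute)
  also have "\<dots> = Q (Suc t) u v" using mpow_Suc_left[of V u v P t] Suc finite_V by simp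
  finally show ?case .
qed auto

lemma mpow_col_sum: "u \<in> V \<Longrightarrow> (\<Sum>v\<in>V. Q t v u) = 1"
  using mpow_row_sum[of u t] by (simp add: mpow_sym cong: sum.cong)

lemma P_col_sum: "u \<in> V \<Longrightarrow> (\<Sum>v\<in>V. P v u) = 1"
  using P_row_sum[of u] by (simp add: P_sym cong: sum.cong)

lemma mpow_add: "x \<in> V \<Longrightarrow> u \<in> V \<Longrightarrow> Q (k + m) x u = (\<Sum>y\<in>V. Q k x y * Q m y u)"
proof (induction m arbitrary: u)
  case 0 thus ?case using finite_V by (simp add: if_distrib cong: if_cong)
next
  case (Suc m)
  have "Q (k + Suc m) x u = (\<Sum>w\<in>V. (\<Sum>y\<in>V. Q k x y * Q m y w) * P w u)"
    using Suc by (auto intro: sum.cong)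
  also have "\<dots> = (\<Sum>y\<in>V. Q k x y * (\<Sum>w\<in>V. Q m y w * P w u))"
    by (simp add: sum_distrib_left sum_distrib_right mult.assoc) (rule sum.swap)
  finally show ?case by simp
qed

end
section \<open>Contraction towards the uniform distribution\<close>

definition l1_norm :: "'v set \<Rightarrow> ('v \<Rightarrow> real) \<Rightarrow> real" where
  "l1_norm V f = (\<Sum>v\<in>V. \<bar>f v\<bar>)"

lemma l1_norm_nonneg: "l1_norm V f \<ge> 0"
  unfolding l1_norm_def by (simp add: sum_nonneg)

lemma l1_norm_stochastic_le:
  assumes "finite V" and nonneg: "\<And>v u. v \<in> V \<Longrightarrow> u \<in> V \<Longrightarrow> M v u \<ge> 0"
    and row_sum: "\<And>v. v \<in> V \<Longrightarrow> (\<Sum>u\<in>V. M v u) = 1"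
  shows "l1_norm V (\<lambda>u. \<Sum>v\<in>V. f v * M v u) \<le> l1_norm V f"
proof -
  have "l1_norm V (\<lambda>u. \<Sum>v\<in>V. f v * M v u) \<le> (\<Sum>u\<in>V. \<Sum>v\<in>V. \<bar>f v\<bar> * M v u)"
    unfolding l1_norm_def
    by (intro sum_mono order.trans[OF sum_abs]) (simp add: abs_mult nonneg)
  also have "\<dots> = (\<Sum>v\<in>V. \<bar>f v\<bar> * (\<Sum>u\<in>V. M v u))"
    by (subst sum.swap) (simp add: sum_distrib_left)
  also have "\<dots> = l1_norm V f" unfolding l1_norm_def by (intro sum.cong) (auto simp: row_sum)
  finally show ?thesis .
qed

text \<open>A signed measure \<open>f = p - q\<close> of total mass zero, with \<open>p, q \<ge> 0\<close> of equal mass \<open>m\<close>,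
  is the normalised coupling \<open>p \<otimes> q / m\<close> of differences of point masses.\<close>

lemma sum_mult_eq_coupling:
  fixes p q :: "'v \<Rightarrow> real"
  assumes "(\<Sum>x\<in>V. p x) = m" "(\<Sum>y\<in>V. q y) = m"
  shows "m * (\<Sum>v\<in>V. (p v - q v) * M v u) = (\<Sum>x\<in>V. \<Sum>y\<in>V. p x * q y * (M x u - M y u))"
proof -
  have "(\<Sum>x\<in>V. \<Sum>y\<in>V. p x * q y * (M x u - M y u))
      = (\<Sum>y\<in>V. q y) * (\<Sum>x\<in>V. p x * M x u) - (\<Sum>x\<in>V. p x) * (\<Sum>y\<in>V. q y * M y u)"
    by (simp add: sum_distrib_left sum_distrib_right sum_subtractf algebra_simps)
      (subst (2) sum.swap, simp add: algebra_simps)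
  also have "\<dots> = m * (\<Sum>v\<in>V. (p v - q v) * M v u)"
    using assms by (simp add: left_diff_distrib sum_subtractf right_diff_distrib)
  finally show ?thesis ..
qed

lemma l1_norm_zero_sum_le:
  assumes "finite V" and sum_zero: "(\<Sum>v\<in>V. f v) = 0"
    and nonneg: "\<And>v u. v \<in> V \<Longrightarrow> u \<in> V \<Longrightarrow> M v u \<ge> 0"
    and rows_close: "\<And>x y. x \<in> V \<Longrightarrow> y \<in> V \<Longrightarrow> (\<Sum>u\<in>V. \<bar>M x u - M y u\<bar>) \<le> c"
  shows "l1_norm V (\<lambda>u. \<Sum>v\<in>V. f v * M v u) \<le> c / 2 * l1_norm V f"
proof -
  define p where "p x = max (f x) 0" for x
  define q where "q x = max (- f x) 0" for x
  define m where "m = (\<Sum>x\<in>V. p x)"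
  have f_eq: "f x = p x - q x" and pq_nonneg: "p x \<ge> 0" "q x \<ge> 0" for x
    unfolding p_def q_def by auto
  have q_mass: "(\<Sum>y\<in>V. q y) = m"
    using sum_zero unfolding m_def by (simp add: f_eq sum_subtractf)
  have l1_f: "l1_norm V f = 2 * m"
  proof -
    have "l1_norm V f = (\<Sum>x\<in>V. p x + q x)" unfolding l1_norm_def p_def q_def
      by (intro sum.cong) auto
    thus ?thesis using q_mass by (simp add: sum.distrib m_def)
  qed
  have m_nonneg: "m \<ge> 0" unfolding m_def by (simp add: sum_nonneg pq_nonneg)
  have "m * l1_norm V (\<lambda>u. \<Sum>v\<in>V. f v * M v u) = (\<Sum>u\<in>V. m * \<bar>\<Sum>v\<in>V. f v * M v u\<bar>)"
    unfolding l1_norm_def by (rule sum_distrib_left)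
  also have "\<dots> = (\<Sum>u\<in>V. \<bar>m * (\<Sum>v\<in>V. f v * M v u)\<bar>)"
    using m_nonneg by (simp add: abs_mult)
  also have "\<dots> = (\<Sum>u\<in>V. \<bar>\<Sum>x\<in>V. \<Sum>y\<in>V. p x * q y * (M x u - M y u)\<bar>)"
    unfolding f_eq sum_mult_eq_coupling[OF m_def[symmetric] q_mass] ..
  also have "\<dots> \<le> (\<Sum>u\<in>V. \<Sum>x\<in>V. \<Sum>y\<in>V. p x * q y * \<bar>M x u - M y u\<bar>)"
    by (intro sum_mono order.trans[OF sum_abs] order.trans[OF sum_abs])
      (simp add: abs_mult pq_nonneg)
  also have "\<dots> = (\<Sum>x\<in>V. \<Sum>y\<in>V. p x * q y * (\<Sum>u\<in>V. \<bar>M x u - M y u\<bar>))"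
    by (simp add: sum_distrib_left) (subst sum.swap, rule sum.cong, simp, subst sum.swap, simp)
  also have "\<dots> \<le> (\<Sum>x\<in>V. \<Sum>y\<in>V. p x * q y * c)"
    by (intro sum_mono mult_left_mono rows_close) (auto simp: pq_nonneg)
  also have "\<dots> = m * (m * c)"
    by (simp add: m_def q_mass sum_distrib_left[symmetric] sum_distrib_right[symmetric] mult.assoc)
  finally have "m * l1_norm V (\<lambda>u. \<Sum>v\<in>V. f v * M v u) \<le> m * (c / 2 * l1_norm V f)"
    by (simp add: l1_f mult.commute)
  then show ?thesis
    using l1_f m_nonneg by (cases "m = 0") (auto simp: l1_norm_def sum_nonneg_eq_0_iff \<open>finite V\<close>)
qed

lemma l1_dist_le_overlap:
  fixes f g :: "'v \<Rightarrow> real"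
  assumes "finite V" "\<And>u. u \<in> V \<Longrightarrow> f u \<ge> 0" "(\<Sum>u\<in>V. f u) = 1" "\<And>u. u \<in> V \<Longrightarrow> g u \<ge> 0" "(\<Sum>u\<in>V. g u) = 1"
    and "z \<in> V" "f z \<ge> d" "g z \<ge> d"
  shows "(\<Sum>u\<in>V. \<bar>f u - g u\<bar>) \<le> 2 - 2 * d"
proof -
  have "(\<Sum>u\<in>V. \<bar>f u - g u\<bar>) = (\<Sum>u\<in>V. f u + g u - 2 * min (f u) (g u))"
    by (intro sum.cong) auto
  also have "\<dots> = 2 - 2 * (\<Sum>u\<in>V. min (f u) (g u))"
    using assms by (simp add: sum_subtractf sum.distrib sum_distrib_left)
  moreover have "min (f z) (g z) \<le> (\<Sum>u\<in>V. min (f u) (g u))"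
    using assms by (intro member_le_sum) auto
  ultimately show ?thesis using assms by linarith
qed

lemma sum_half_pow_div_le:
  assumes "m \<ge> 1"
  shows "(\<Sum>k<N. (1/2::real) ^ (k div m)) \<le> 2 * real m"
proof -
  have blocks: "(\<Sum>k<j * m. (1/2::real) ^ (k div m)) = real m * (\<Sum>i<j. (1/2) ^ i)" for j
  proof (induction j)
    case (Suc j)
    have "(\<Sum>k<Suc j * m. (1/2::real) ^ (k div m))
        = (\<Sum>k<j * m. (1/2::real) ^ (k div m)) + (\<Sum>k\<in>{j * m..<j * m + m}. (1/2::real) ^ (k div m))"
      by (simp add: add.commute lessThan_atLeast0 sum.atLeastLessThan_concat)
    also have "(\<Sum>k\<in>{j * m..<j * m + m}. (1/2::real) ^ (k div m)) = (\<Sum>k\<in>{j * m..<j * m + m}. (1/2) ^ j)"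
    proof (intro sum.cong refl)
      fix k assume "k \<in> {j * m..<j * m + m}"
      then obtain i where "k = j * m + i" "i < m" by (metis atLeastLessThan_iff le_Suc_ex nat_add_left_cancel_less)
      then show "(1/2::real) ^ (k div m) = (1/2) ^ j" by simp
    qed
    finally show ?case using Suc by (simp add: algebra_simps)
  qed simp
  have "(\<Sum>k<N. (1/2::real) ^ (k div m)) \<le> (\<Sum>k<N * m. (1/2::real) ^ (k div m))"
    using \<open>m \<ge> 1\<close> by (intro sum_mono2) auto
  also have "\<dots> = real m * (2 * (1 - (1/2) ^ N))"
    unfolding blocks by (simp add: geometric_sum)
  also have "\<dots> \<le> 2 * real m" by (simp add: right_diff_distrib)
  finally show ?thesis .
qed

context sym_stochastic
begin

definition unif :: real where "unif = 1 / real (card V)"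

definition dist_unif :: "'v \<Rightarrow> nat \<Rightarrow> real" where
  "dist_unif x k = l1_norm V (\<lambda>u. Q k x u - unif)"

lemma sum_unif: "x \<in> V \<Longrightarrow> (\<Sum>u\<in>V. unif) = 1"
  using finite_V by (auto simp: unif_def card_gt_0_iff)

lemma dtv_eq_dist_unif: "dtv V (Q t x) (\<lambda>_. unif) = dist_unif x t / 2"
  unfolding dtv_def dist_unif_def l1_norm_def by simp

lemma dist_unif_nonneg: "dist_unif x k \<ge> 0"
  unfolding dist_unif_def by (rule l1_norm_nonneg)

lemma dist_unif_0_le: "x \<in> V \<Longrightarrow> dist_unif x 0 \<le> 2"
proof -
  assume x: "x \<in> V"
  have "dist_unif x 0 \<le> (\<Sum>u\<in>V. (if u = x then 1 else 0) + unif)"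
    unfolding dist_unif_def l1_norm_def using finite_V x
    by (intro sum_mono) (auto simp: unif_def abs_le_iff)
  also have "\<dots> = 2" using x finite_V sum_unif[OF x] by (simp add: sum.distrib)
  finally show ?thesis .
qed

lemma mpow_add_minus_unif:
  assumes "x \<in> V" "u \<in> V"
  shows "Q (k + m) x u - unif = (\<Sum>y\<in>V. (Q k x y - unif) * Q m y u)"
  using mpow_add[OF assms] mpow_col_sum[OF assms(2)]
  by (simp add: left_diff_distrib sum_subtractf sum_distrib_left[symmetric])

lemma dist_unif_add_le:
  assumes x: "x \<in> V"
    and rows_close: "\<And>y y'. y \<in> V \<Longrightarrow> y' \<in> V \<Longrightarrow> (\<Sum>u\<in>V. \<bar>Q m y u - Q m y' u\<bar>) \<le> c"
  shows "dist_unif x (k + m) \<le> c / 2 * dist_unif x k"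
proof -
  have "dist_unif x (k + m) = l1_norm V (\<lambda>u. \<Sum>y\<in>V. (Q k x y - unif) * Q m y u)"
    unfolding dist_unif_def l1_norm_def using x by (intro sum.cong) (auto simp: mpow_add_minus_unif)
  also have "\<dots> \<le> c / 2 * dist_unif x k" unfolding dist_unif_def
  proof (rule l1_norm_zero_sum_le[OF finite_V _ mpow_nonneg rows_close])
    show "(\<Sum>v\<in>V. Q k x v - unif) = 0"
      using mpow_row_sum[OF x] sum_unif[OF x] by (simp add: sum_subtractf)
  qed auto
  finally show ?thesis .
qed

lemma dist_unif_Suc_le: "x \<in> V \<Longrightarrow> dist_unif x (Suc k) \<le> dist_unif x k"
proof -
  assume x: "x \<in> V"
  have "Q (Suc k) x u - unif = (\<Sum>w\<in>V. (Q k x w - unif) * P w u)" if "u \<in> V" for u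
    using P_col_sum[OF that] by (simp add: left_diff_distrib sum_subtractf sum_distrib_left[symmetric])
  then have "dist_unif x (Suc k) = l1_norm V (\<lambda>u. \<Sum>w\<in>V. (Q k x w - unif) * P w u)"
    unfolding dist_unif_def l1_norm_def by (intro sum.cong) auto
  also have "\<dots> \<le> dist_unif x k"
    unfolding dist_unif_def by (rule l1_norm_stochastic_le[OF finite_V P_nonneg P_row_sum])
  finally show ?thesis .
qed

lemma dist_unif_antimono:
  assumes "x \<in> V" "k \<le> k'" shows "dist_unif x k' \<le> dist_unif x k"
  using assms(2)
proof (induction k' rule: dec_induct)
  case (step k')
  then show ?case using dist_unif_Suc_le[OF assms(1), of k'] by simp
qed simp

lemma dist_unif_halves:
  assumes x: "x \<in> V" and half: "\<And>y. y \<in> V \<Longrightarrow> dist_unif y m \<le> 1/2"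
  shows "dist_unif x (k + m) \<le> 1/2 * dist_unif x k"
proof -
  have triangle: "(\<Sum>u\<in>V. \<bar>Q m y u - Q m y' u\<bar>) \<le> dist_unif y m + dist_unif y' m" for y y'
    unfolding dist_unif_def l1_norm_def sum.distrib[symmetric] by (intro sum_mono) linarith
  have "(\<Sum>u\<in>V. \<bar>Q m y u - Q m y' u\<bar>) \<le> 1" if "y \<in> V" "y' \<in> V" for y y'
    using triangle[of y y'] half[OF that(1)] half[OF that(2)] by linarith
  from dist_unif_add_le[OF x this] show ?thesis by simp
qed

lemma dist_unif_geometric:
  assumes x: "x \<in> V" and half: "\<And>y. y \<in> V \<Longrightarrow> dist_unif y m \<le> 1/2" and "m \<ge> 1"
  shows "dist_unif x k \<le> 2 * (1/2) ^ (k div m)"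
proof (induction k rule: less_induct)
  case (less k)
  show ?case
  proof (cases "k < m")
    case True
    thus ?thesis using dist_unif_antimono[OF x, of 0 k] dist_unif_0_le[OF x] by simp
  next
    case False
    define j where "j = k - m"
    have j: "k = j + m" using False unfolding j_def by simp
    moreover have "k div m = Suc (j div m)" using \<open>m \<ge> 1\<close> unfolding j by simp
    moreover have "dist_unif x j \<le> 2 * (1/2) ^ (j div m)" using less.IH j \<open>m \<ge> 1\<close> by simp
    ultimately show ?thesis using dist_unif_halves[OF x half, of j] by simp
  qed
qed

lemma sum_dist_unif_le:
  assumes "x \<in> V" "\<And>y. y \<in> V \<Longrightarrow> dist_unif y m \<le> 1/2" "m \<ge> 1"
  shows "(\<Sum>k<N. dist_unif x k) \<le> 4 * real m"
proof -
  have "(\<Sum>k<N. dist_unif x k) \<le> 2 * (\<Sum>k<N. (1/2) ^ (k div m))"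
    unfolding sum_distrib_left by (intro sum_mono dist_unif_geometric[OF assms])
  also have "\<dots> \<le> 4 * real m" using sum_half_pow_div_le[OF assms(3)] by simp
  finally show ?thesis .
qed

text \<open>Doeblin's argument: a common lower bound \<open>d\<close> on \<open>P^m(y,z)\<close> makes the distance to
  \<open>\<pi>\<close> contract by \<open>1 - d\<close> every \<open>m\<close> steps; in particular the set defining the
  mixing time is nonempty.\<close>

lemma dist_unif_eventually_le_half:
  assumes z: "z \<in> V" and "d > 0" and lower: "\<And>y. y \<in> V \<Longrightarrow> Q m y z \<ge> d" and x: "x \<in> V"
  shows "\<exists>t. dist_unif x t \<le> 1/2"
proof -
  have "d \<le> Q m x z" using lower[OF x] .
  also have "\<dots> \<le> 1"
    using mpow_row_sum[OF x, of m] member_le_sum[OF z, of "Q m x"] finite_V mpow_nonneg x by auto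
  finally have "d \<le> 1" .
  have contract: "dist_unif x (k + m) \<le> (1 - d) * dist_unif x k" for k
  proof -
    have "(\<Sum>u\<in>V. \<bar>Q m y u - Q m y' u\<bar>) \<le> 2 - 2 * d" if "y \<in> V" "y' \<in> V" for y y'
      using that by (intro l1_dist_le_overlap[OF finite_V, of "Q m y" "Q m y'" z d] mpow_nonneg mpow_row_sum z lower)
    from dist_unif_add_le[OF x this, of k] show ?thesis by (simp add: algebra_simps)
  qed
  have geometric: "dist_unif x (j * m) \<le> 2 * (1 - d) ^ j" for j
  proof (induction j)
    case (Suc j)
    have "dist_unif x (Suc j * m) \<le> (1 - d) * dist_unif x (j * m)"
      using contract[of "j * m"] by (simp add: add.commute)
    also have "\<dots> \<le> (1 - d) * (2 * (1 - d) ^ j)" using Suc \<open>d \<le> 1\<close> by (intro mult_left_mono) auto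
    finally show ?case by simp
  qed (use dist_unif_0_le[OF x] in simp)
  obtain j where "(1 - d) ^ j < 1/4"
    using real_arch_pow_inv[of "1/4" "1 - d"] \<open>d > 0\<close> by auto
  with geometric[of j] have "dist_unif x (j * m) \<le> 1/2" by linarith
  then show ?thesis ..
qed

lemma dist_unif_mixing_time_le:
  assumes ex: "\<And>x. x \<in> V \<Longrightarrow> \<exists>t. dist_unif x t \<le> 1/2" and x: "x \<in> V"
  shows "dist_unif x (mixing_time V P (\<lambda>_. unif) (1/4)) \<le> 1/2"
proof -
  let ?L = "\<lambda>v. LEAST t. dtv V (Q t v) (\<lambda>_. unif) \<le> 1/4"
  have "\<exists>t. dtv V (Q t x) (\<lambda>_. unif) \<le> 1/4" using ex[OF x] by (auto simp: dtv_eq_dist_unif mult.commute)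
  then have "dtv V (Q (?L x) x) (\<lambda>_. unif) \<le> 1/4" by (rule LeastI_ex)
  then have "dist_unif x (?L x) \<le> 1/2" by (simp add: dtv_eq_dist_unif)
  moreover have "?L x \<le> mixing_time V P (\<lambda>_. unif) (1/4)"
    unfolding mixing_time_def using finite_V x by (intro Max_ge) auto
  ultimately show ?thesis using dist_unif_antimono[OF x] by (meson order.trans)
qed

end

section \<open>Discrepancy of a single router\<close>

lemma Icount_Suc:
  "z \<le> z' \<Longrightarrow> Icount \<sigma> v u z (Suc z') = Icount \<sigma> v u z z' + (if \<sigma> v z' = u then 1 else 0)"
proof -
  assume "z \<le> z'"
  then have "{j \<in> {z..<Suc z'}. \<sigma> v j = u} = {j \<in> {z..<z'}. \<sigma> v j = u} \<union> (if \<sigma> v z' = u then {z'} else {})"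
    by (auto simp: less_Suc_eq)
  then show ?thesis unfolding Icount_def by (auto simp: card_insert_if)
qed

lemma Icount_split: "z \<le> z' \<Longrightarrow> Icount \<sigma> v u 0 z' = Icount \<sigma> v u 0 z + Icount \<sigma> v u z z'"
proof (induction z' rule: dec_induct)
  case base then show ?case by (simp add: Icount_def)
next
  case (step z') then show ?case by (simp add: Icount_Suc)
qed

lemma Icount_mono: "z \<le> z' \<Longrightarrow> Icount \<sigma> v u 0 z \<le> Icount \<sigma> v u 0 z'"
  using Icount_split[of z z' \<sigma> v u] by simp

lemma sum_Icount:
  assumes "finite N" "\<And>j. \<sigma> v j \<in> N" "z \<le> z'"
  shows "(\<Sum>u\<in>N. Icount \<sigma> v u z z') = z' - z"
  using assms(3)
proof (induction z' rule: dec_induct)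
  case (step z')
  have "(\<Sum>u\<in>N. Icount \<sigma> v u z (Suc z')) = (\<Sum>u\<in>N. Icount \<sigma> v u z z') + 1"
    using step assms(1,2) by (simp add: Icount_Suc sum.distrib)
  then show ?case using step.IH step.hyps by simp
qed (simp add: Icount_def)

text \<open>\<open>next_deadline i\<close> is the time \<open>(I_{v,u}[0,i) + 1) / P(v,u)\<close> at which the neighbour
  \<open>u = \<sigma> v i\<close> chosen at step \<open>i\<close> is due its next token; both routers choose a neighbour
  minimising this key.\<close>

locale router_row =
  fixes V :: "'v set" and P :: "'v \<Rightarrow> 'v \<Rightarrow> real" and \<sigma> :: "'v \<Rightarrow> nat \<Rightarrow> 'v" and v :: 'v
  assumes finite_V: "finite V"
    and P_nonneg: "\<And>u. u \<in> V \<Longrightarrow> P v u \<ge> 0"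
    and P_row_sum: "(\<Sum>u\<in>V. P v u) = 1"
    and \<sigma>_in_nbr: "\<And>i. \<sigma> v i \<in> nbr V P v"
begin

abbreviation N where "N \<equiv> nbr V P v"
abbreviation c where "c u i \<equiv> real (Icount \<sigma> v u 0 i)"

definition next_deadline :: "nat \<Rightarrow> real" where
  "next_deadline i = (c (\<sigma> v i) i + 1) / P v (\<sigma> v i)"

lemma finite_N: "finite N"
  using finite_V unfolding nbr_def by auto

lemma P_pos: "u \<in> N \<Longrightarrow> P v u > 0"
  unfolding nbr_def by auto

lemma sum_N_P: "(\<Sum>u\<in>N. P v u) = 1"
proof -
  have "(\<Sum>u\<in>V. P v u) = (\<Sum>u\<in>N. P v u)"
    using P_nonneg by (intro sum.mono_neutral_right[OF finite_V]) (auto simp: nbr_def order.order_iff_strict)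
  then show ?thesis using P_row_sum by simp
qed

lemma sum_N_count: "(\<Sum>u\<in>N. c u i) = real i"
  using sum_Icount[of N \<sigma> v 0 i] finite_N \<sigma>_in_nbr by (simp flip: of_nat_sum)

lemma count_Suc: "c u (Suc i) = c u i + (if \<sigma> v i = u then 1 else 0)"
  by (simp add: Icount_Suc)

lemma count_mono: "i \<le> j \<Longrightarrow> c u i \<le> c u j"
  by (simp add: Icount_mono)

lemma count_not_nbr: "u \<notin> N \<Longrightarrow> c u i = 0"
  using \<sigma>_in_nbr unfolding Icount_def by force

lemma count_capped_while_urgent:
  assumes urgent: "\<And>i. s \<le> i \<Longrightarrow> i < z \<Longrightarrow> next_deadline i \<le> real z"
    and "s \<le> i" "i \<le> z" "w \<in> N"
  shows "c w i \<le> c w s \<or> c w i \<le> real z * P v w"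
  using assms(2,3)
proof (induction i rule: dec_induct)
  case (step n)
  show ?case
  proof (cases "\<sigma> v n = w")
    case True
    have "next_deadline n \<le> real z" using urgent step by simp
    then have "c w n + 1 \<le> real z * P v w"
      using True P_pos[OF \<open>w \<in> N\<close>] by (simp add: next_deadline_def field_simps)
    then show ?thesis using True by (simp add: count_Suc)
  qed (use step in \<open>simp add: count_Suc\<close>)
qed simp

end

lemma exists_last_failure:
  fixes p :: "nat \<Rightarrow> bool"
  shows "\<exists>s\<le>z. (\<forall>i. s \<le> i \<longrightarrow> i < z \<longrightarrow> p i) \<and> (0 < s \<longrightarrow> \<not> p (s - 1))"
proof (induction z)
  case (Suc z)
  then obtain s where s: "s \<le> z" "\<forall>i. s \<le> i \<longrightarrow> i < z \<longrightarrow> p i" "0 < s \<longrightarrow> \<not> p (s - 1)" by blast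
  then show ?case
  proof (cases "p z")
    case True
    then show ?thesis using s by (intro exI[of _ s]) (auto simp: less_Suc_eq)
  qed (auto intro!: exI[of _ "Suc z"])
qed simp

locale srt_row = router_row +
  assumes srt: "\<And>i. \<sigma> v i \<in> srt_T V P \<sigma> v i \<and>
    (\<forall>u\<in>srt_T V P \<sigma> v i. next_deadline i \<le> (c u i + 1) / P v u)"
begin

lemma srt_discrepancy_upper: "u \<in> N \<Longrightarrow> c u z - real z * P v u < 1"
proof (induction z)
  case (Suc z)
  show ?case
  proof (cases "\<sigma> v z = u")
    case True
    then have "c u z - real (z + 1) * P v u < 0" using srt[of z] unfolding srt_T_def by auto
    then show ?thesis using True by (simp add: count_Suc)
  qed (use Suc P_pos[OF Suc.prems] in \<open>simp add: count_Suc algebra_simps\<close>)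
qed (simp add: Icount_def)

lemma srt_on_schedule:
  assumes deferred: "0 < s \<Longrightarrow> real z < next_deadline (s - 1)" and "w \<in> N"
  shows "real s * P v w \<le> c w s \<or> real z * P v w < c w s + 1"
proof (cases s)
  case (Suc t)
  then have "real z < next_deadline t" using deferred by simp
  show ?thesis
  proof (cases "w \<in> srt_T V P \<sigma> v t")
    case True
    then have "real z < (c w t + 1) / P v w" using srt[of t] \<open>real z < next_deadline t\<close> by force
    then have "real z * P v w < c w t + 1" using P_pos[OF \<open>w \<in> N\<close>] by (simp add: field_simps)
    then show ?thesis using count_mono[of t s w] Suc by simp
  next
    case False
    then have "real (t + 1) * P v w \<le> c w t" using \<open>w \<in> N\<close> unfolding srt_T_def by auto
    then show ?thesis using count_mono[of t s w] Suc by simp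
  qed
qed simp

text \<open>If \<open>u\<close> were overdue at time \<open>z\<close>, let \<open>s - 1\<close> be the last step before \<open>z\<close> whose token was
  not due by \<open>z\<close>. All tokens sent in \<open>[s, z)\<close> were due by \<open>z\<close>, so in that window every neighbour
  receives at most its share \<open>(z - s) P(v,w)\<close> and \<open>u\<close> one less; but \<open>z - s\<close> tokens are sent.\<close>

lemma srt_discrepancy_lower:
  assumes "u \<in> N" shows "c u z - real z * P v u > -1"
proof (rule ccontr)
  assume "\<not> ?thesis"
  then have overdue: "c u z + 1 \<le> real z * P v u" by simp
  obtain s where "s \<le> z" and urgent: "\<And>i. s \<le> i \<Longrightarrow> i < z \<Longrightarrow> next_deadline i \<le> real z"
    and deferred: "0 < s \<Longrightarrow> real z < next_deadline (s - 1)"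
    using exists_last_failure[of z "\<lambda>i. next_deadline i \<le> real z"] by force
  have elapsed: "real (z - s) * P v w = real z * P v w - real s * P v w" for w
    using \<open>s \<le> z\<close> by (simp add: left_diff_distrib)
  have window: "c w z - c w s \<le> real (z - s) * P v w" if w: "w \<in> N" for w
  proof -
    have no_new: "c w z - c w s \<le> real (z - s) * P v w" if "c w z < c w s + 1"
    proof -
      have "c w z \<le> c w s" using that
        by (metis of_nat_Suc of_nat_less_iff add.commute less_Suc_eq_le of_nat_le_iff)
      moreover have "0 \<le> real (z - s) * P v w" using P_pos[OF w] by simp
      ultimately show ?thesis by linarith
    qed
    have "c w z \<le> c w s \<or> c w z \<le> real z * P v w"
      using count_capped_while_urgent[of s z z w] urgent \<open>s \<le> z\<close> w by blast
    moreover have "real s * P v w \<le> c w s \<or> real z * P v w < c w s + 1"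
      using srt_on_schedule[of s z w] deferred w by blast
    ultimately have "c w z < c w s + 1 \<or> c w z - c w s \<le> real (z - s) * P v w"
      using elapsed[of w] by (elim disjE) linarith+
    then show ?thesis using no_new by blast
  qed
  have "real s * P v u \<le> c u s \<or> real z * P v u < c u s + 1"
    using srt_on_schedule[of s z u] deferred \<open>u \<in> N\<close> by blast
  then have window_u: "c u z - c u s \<le> real (z - s) * P v u - 1"
    using overdue count_mono[OF \<open>s \<le> z\<close>, of u] elapsed[of u]
    by (elim disjE) linarith+
  have "real z - real s = (\<Sum>w\<in>N. c w z - c w s)" by (simp add: sum_subtractf sum_N_count)
  also have "\<dots> = (c u z - c u s) + (\<Sum>w\<in>N - {u}. c w z - c w s)"
    using finite_N \<open>u \<in> N\<close> by (simp add: sum.remove)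
  also have "\<dots> \<le> (real (z - s) * P v u - 1) + (\<Sum>w\<in>N - {u}. real (z - s) * P v w)"
    using window_u window by (intro add_mono sum_mono) auto
  also have "\<dots> = (\<Sum>w\<in>N. real (z - s) * P v w) - 1"
    using finite_N \<open>u \<in> N\<close> by (simp add: sum.remove)
  also have "\<dots> = real z - real s - 1"
    using \<open>s \<le> z\<close> by (simp add: sum_distrib_left[symmetric] sum_N_P)
  finally show False by simp
qed

lemma srt_discrepancy: "u \<in> N \<Longrightarrow> \<bar>c u z - real z * P v u\<bar> < 1"
  unfolding abs_less_iff using srt_discrepancy_upper[of u z] srt_discrepancy_lower[of u z] by linarith

end

locale billiard_row = router_row +
  assumes billiard: "\<And>i u. u \<in> N \<Longrightarrow> next_deadline i \<le> (c u i + 1) / P v u"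
begin

lemma deadline_mult_le: "w \<in> N \<Longrightarrow> next_deadline i * P v w \<le> c w i + 1"
  using billiard[of w i] P_pos[of w] by (simp add: pos_le_divide_eq)

lemma next_deadline_le_Suc: "next_deadline i \<le> next_deadline (Suc i)"
proof -
  let ?w = "\<sigma> v (Suc i)"
  have "next_deadline i \<le> (c ?w i + 1) / P v ?w" using billiard \<sigma>_in_nbr by blast
  also have "\<dots> \<le> (c ?w (Suc i) + 1) / P v ?w"
    using P_pos[OF \<sigma>_in_nbr, of "Suc i"] count_mono[of i "Suc i" ?w]
    by (intro divide_right_mono) auto
  finally show ?thesis unfolding next_deadline_def .
qed

lemma count_le_deadline_mult: "w \<in> N \<Longrightarrow> c w i \<le> next_deadline i * P v w"
proof (induction i)
  case 0
  have "next_deadline 0 > 0"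
    unfolding next_deadline_def using P_pos[OF \<sigma>_in_nbr[of 0]] by (simp add: Icount_def)
  then show ?case using P_pos[OF "0.prems"] by (simp add: Icount_def)
next
  case (Suc i)
  have "next_deadline i * P v w \<le> next_deadline (Suc i) * P v w"
    using next_deadline_le_Suc P_pos[OF Suc.prems] by (simp add: mult_right_mono)
  moreover have "c w (Suc i) \<le> next_deadline i * P v w"
  proof (cases "\<sigma> v i = w")
    case True
    then show ?thesis using P_pos[OF Suc.prems] by (simp add: count_Suc next_deadline_def)
  qed (use Suc in \<open>simp add: count_Suc\<close>)
  ultimately show ?case by linarith
qed

lemma billiard_discrepancy:
  assumes "u \<in> N"
  shows "\<bar>c u z - real z * P v u\<bar> \<le> 1 + real (card N) * P v u"
proof -
  have "real z = (\<Sum>w\<in>N. c w z)" by (simp add: sum_N_count)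
  also have "\<dots> \<le> (\<Sum>w\<in>N. next_deadline z * P v w)" by (intro sum_mono count_le_deadline_mult)
  finally have lower: "real z \<le> next_deadline z" by (simp add: sum_distrib_left[symmetric] sum_N_P)
  have "next_deadline z - real (card N) = (\<Sum>w\<in>N. next_deadline z * P v w - 1)"
    by (simp add: sum_subtractf sum_distrib_left[symmetric] sum_N_P)
  also have "\<dots> \<le> (\<Sum>w\<in>N. c w z)" using deadline_mult_le by (intro sum_mono) (simp add: algebra_simps)
  finally have upper: "next_deadline z - real (card N) \<le> real z" by (simp add: sum_N_count)
  have "\<bar>c u z - next_deadline z * P v u\<bar> \<le> 1"
    using count_le_deadline_mult[OF assms, of z] deadline_mult_le[OF assms, of z] by simp
  moreover have "\<bar>(next_deadline z - real z) * P v u\<bar> \<le> real (card N) * P v u"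
    using lower upper P_pos[OF assms] by (simp add: abs_mult mult_right_mono)
  ultimately show ?thesis by (simp add: algebra_simps abs_le_iff)
qed

end

lemma router_in_nbr:
  assumes "is_srt_router V P \<sigma> \<or> is_billiard_router V P \<sigma>" "v \<in> V"
  shows "\<sigma> v i \<in> nbr V P v"
  using assms unfolding is_srt_router_def is_billiard_router_def srt_T_def by auto

lemma (in router_row) router_discrepancy_le:
  assumes "is_srt_router V P \<sigma> \<or> is_billiard_router V P \<sigma>" "v \<in> V" "u \<in> N"
  shows "\<bar>c u z - real z * P v u\<bar> \<le> 1 + real (card N) * P v u"
  using assms(1)
proof
  assume "is_srt_router V P \<sigma>"
  then interpret srt_row V P \<sigma> v
    using \<open>v \<in> V\<close> by unfold_locales (auto simp: is_srt_router_def next_deadline_def)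
  have "0 \<le> real (card N) * P v u" using P_pos[OF \<open>u \<in> N\<close>] by simp
  then show ?thesis using srt_discrepancy[OF \<open>u \<in> N\<close>, of z] by linarith
next
  assume "is_billiard_router V P \<sigma>"
  then interpret billiard_row V P \<sigma> v
    using \<open>v \<in> V\<close> by unfold_locales (auto simp: is_billiard_router_def next_deadline_def)
  show ?thesis by (rule billiard_discrepancy[OF \<open>u \<in> N\<close>])
qed

section \<open>Routers versus the random walk\<close>

definition sent :: "'v set \<Rightarrow> ('v \<Rightarrow> nat \<Rightarrow> 'v) \<Rightarrow> ('v \<Rightarrow> nat) \<Rightarrow> nat \<Rightarrow> 'v \<Rightarrow> nat" where
  "sent V \<sigma> \<chi>0 t = snd (router_state V \<sigma> \<chi>0 t)"

lemma chi_0: "chi V \<sigma> \<chi>0 0 = \<chi>0"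
  unfolding chi_def by simp

lemma sent_0: "sent V \<sigma> \<chi>0 0 v = 0"
  unfolding sent_def by simp

lemma sent_Suc: "sent V \<sigma> \<chi>0 (Suc t) v = sent V \<sigma> \<chi>0 t v + chi V \<sigma> \<chi>0 t v"
  unfolding chi_def sent_def by (simp add: split_def Let_def)

lemma chi_Suc:
  "chi V \<sigma> \<chi>0 (Suc t) u = (\<Sum>v\<in>V. Icount \<sigma> v u (sent V \<sigma> \<chi>0 t v) (sent V \<sigma> \<chi>0 (Suc t) v))"
  unfolding chi_def sent_def by (simp add: split_def Let_def)

lemma summation_by_parts:
  fixes d g :: "nat \<Rightarrow> real"
  shows "(\<Sum>t<T. (d (Suc t) - d t) * g t) = d T * g T - d 0 * g 0 - (\<Sum>t<T. d (Suc t) * (g (Suc t) - g t))"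
  by (induction T) (auto simp: algebra_simps)

lemma summation_by_parts_abs_le:
  fixes d q :: "nat \<Rightarrow> real"
  assumes "d 0 = 0" and bounded: "\<And>t. \<bar>d t\<bar> \<le> B"
  shows "\<bar>\<Sum>t<T. (d (Suc t) - d t) * q (T - Suc t)\<bar> \<le> B * (\<bar>q 0\<bar> + (\<Sum>k<T. \<bar>q k - q (k - 1)\<bar>))"
proof -
  define g where "g t = q (T - Suc t)" for t
  have variation: "(\<Sum>t<T. \<bar>g (Suc t) - g t\<bar>) = (\<Sum>k<T. \<bar>q k - q (k - 1)\<bar>)"
  proof -
    have "(\<Sum>t<T. \<bar>g (Suc t) - g t\<bar>) = (\<Sum>t<T. \<bar>q (T - Suc t) - q (T - Suc t - 1)\<bar>)"
      unfolding g_def by (intro sum.cong) (auto simp: abs_minus_commute Suc_diff_Suc)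
    also have "\<dots> = (\<Sum>k<T. \<bar>q k - q (k - 1)\<bar>)"
      by (rule sum.nat_diff_reindex[where g = "\<lambda>k. \<bar>q k - q (k - 1)\<bar>"])
    finally show ?thesis .
  qed
  have "\<bar>\<Sum>t<T. (d (Suc t) - d t) * q (T - Suc t)\<bar> = \<bar>d T * q 0 - (\<Sum>t<T. d (Suc t) * (g (Suc t) - g t))\<bar>"
    using summation_by_parts[of d g T] \<open>d 0 = 0\<close> unfolding g_def by simp
  also have "\<dots> \<le> \<bar>d T\<bar> * \<bar>q 0\<bar> + (\<Sum>t<T. \<bar>d (Suc t)\<bar> * \<bar>g (Suc t) - g t\<bar>)"
    by (rule order.trans[OF abs_triangle_ineq4]) (simp add: abs_mult order.trans[OF sum_abs])
  also have "\<dots> \<le> B * \<bar>q 0\<bar> + (\<Sum>t<T. B * \<bar>g (Suc t) - g t\<bar>)"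
    by (intro add_mono sum_mono mult_right_mono bounded) auto
  finally show ?thesis by (simp add: variation distrib_left sum_distrib_left[symmetric])
qed

context sym_stochastic
begin

definition discrepancy :: "('v \<Rightarrow> nat \<Rightarrow> 'v) \<Rightarrow> 'v \<Rightarrow> 'v \<Rightarrow> nat \<Rightarrow> real" where
  "discrepancy \<sigma> v u z = real (Icount \<sigma> v u 0 z) - real z * P v u"

lemma chi_Suc_propagation:
  assumes "w \<in> V"
  shows "(\<Sum>u\<in>V. real (chi V \<sigma> \<chi>0 (Suc t) u) * Q k u w) - (\<Sum>u\<in>V. real (chi V \<sigma> \<chi>0 t u) * Q (Suc k) u w)
    = (\<Sum>v\<in>V. \<Sum>u\<in>V. (discrepancy \<sigma> v u (sent V \<sigma> \<chi>0 (Suc t) v) - discrepancy \<sigma> v u (sent V \<sigma> \<chi>0 t v))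
        * Q k u w)"
proof -
  let ?c = "chi V \<sigma> \<chi>0 t" and ?S = "sent V \<sigma> \<chi>0 t" and ?S' = "sent V \<sigma> \<chi>0 (Suc t)"
  have increment: "discrepancy \<sigma> v u (?S' v) - discrepancy \<sigma> v u (?S v)
      = real (Icount \<sigma> v u (?S v) (?S' v)) - real (?c v) * P v u" for v u
    using Icount_split[of "?S v" "?S' v" \<sigma> v u]
    unfolding discrepancy_def sent_Suc by (simp add: ring_distribs)
  have "(\<Sum>u\<in>V. real (chi V \<sigma> \<chi>0 (Suc t) u) * Q k u w)
      = (\<Sum>v\<in>V. \<Sum>u\<in>V. real (Icount \<sigma> v u (?S v) (?S' v)) * Q k u w)"
    unfolding chi_Suc by (simp add: sum_distrib_right) (rule sum.swap)
  moreover have "(\<Sum>u\<in>V. real (?c u) * Q (Suc k) u w) = (\<Sum>v\<in>V. \<Sum>u\<in>V. real (?c v) * P v u * Q k u w)"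
    using assms by (simp add: mpow_Suc_left[OF finite_V] sum_distrib_left mult.assoc del: mpow.simps)
  ultimately show ?thesis
    unfolding increment by (simp add: left_diff_distrib sum_subtractf)
qed

lemma chi_minus_mu_eq:
  assumes "w \<in> V"
  shows "real (chi V \<sigma> \<chi>0 T w) - mu V P \<chi>0 T w =
    (\<Sum>v\<in>V. \<Sum>u\<in>V. \<Sum>t<T. (discrepancy \<sigma> v u (sent V \<sigma> \<chi>0 (Suc t) v) - discrepancy \<sigma> v u (sent V \<sigma> \<chi>0 t v))
       * Q (T - Suc t) u w)"
proof -
  define E where "E t = (\<Sum>u\<in>V. real (chi V \<sigma> \<chi>0 t u) * Q (T - t) u w)" for t
  have "E T = (\<Sum>u\<in>V. if u = w then real (chi V \<sigma> \<chi>0 T w) else 0)"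
    unfolding E_def by (intro sum.cong) auto
  then have "E T = real (chi V \<sigma> \<chi>0 T w)" using assms finite_V by simp
  moreover have "E 0 = mu V P \<chi>0 T w" unfolding E_def mu_def by (simp add: chi_0)
  ultimately have "real (chi V \<sigma> \<chi>0 T w) - mu V P \<chi>0 T w = (\<Sum>t<T. E (Suc t) - E t)"
    by (simp add: sum_lessThan_telescope)
  also have "\<dots> = (\<Sum>t<T. \<Sum>v\<in>V. \<Sum>u\<in>V. (discrepancy \<sigma> v u (sent V \<sigma> \<chi>0 (Suc t) v)
      - discrepancy \<sigma> v u (sent V \<sigma> \<chi>0 t v)) * Q (T - Suc t) u w)"
  proof (intro sum.cong refl)
    fix t assume "t \<in> {..<T}"
    then have "T - t = Suc (T - Suc t)" by simp
    then show "E (Suc t) - E t = (\<Sum>v\<in>V. \<Sum>u\<in>V. (discrepancy \<sigma> v u (sent V \<sigma> \<chi>0 (Suc t) v)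
      - discrepancy \<sigma> v u (sent V \<sigma> \<chi>0 t v)) * Q (T - Suc t) u w)"
      unfolding E_def using chi_Suc_propagation[OF assms, of \<sigma> \<chi>0 t "T - Suc t"] by (simp only:)
  qed
  also have "\<dots> = (\<Sum>v\<in>V. \<Sum>u\<in>V. \<Sum>t<T. (discrepancy \<sigma> v u (sent V \<sigma> \<chi>0 (Suc t) v)
      - discrepancy \<sigma> v u (sent V \<sigma> \<chi>0 t v)) * Q (T - Suc t) u w)"
    by (subst sum.swap) (simp add: sum.swap[of _ "{..<T}"])
  finally show ?thesis .
qed

lemma column_variation_le:
  assumes w: "w \<in> V" and half: "\<And>y. y \<in> V \<Longrightarrow> dist_unif y m \<le> 1/2" and "m \<ge> 1"
  shows "(\<Sum>u\<in>V. \<bar>Q 0 u w\<bar> + (\<Sum>k<T. \<bar>Q k u w - Q (k - 1) u w\<bar>)) \<le> 3 + 8 * real m"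
proof -
  have step: "(\<Sum>u\<in>V. \<bar>Q k u w - Q (k - 1) u w\<bar>) \<le> dist_unif w k + dist_unif w (k - 1)" for k
  proof -
    have "(\<Sum>u\<in>V. \<bar>Q k u w - Q (k - 1) u w\<bar>) = (\<Sum>u\<in>V. \<bar>Q k w u - Q (k - 1) w u\<bar>)"
      using w by (intro sum.cong refl) (simp add: mpow_sym[of _ w])
    also have "\<dots> \<le> dist_unif w k + dist_unif w (k - 1)"
      unfolding dist_unif_def l1_norm_def sum.distrib[symmetric] by (intro sum_mono) linarith
    finally show ?thesis .
  qed
  have shifted: "(\<Sum>k<T. dist_unif w (k - 1)) \<le> dist_unif w 0 + (\<Sum>k<T. dist_unif w k)"
  proof -
    have "(\<Sum>k<T. dist_unif w (k - 1)) \<le> (\<Sum>k<Suc T. dist_unif w (k - 1))"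
      by (intro sum_mono2) (auto simp: dist_unif_nonneg)
    also have "\<dots> = dist_unif w 0 + (\<Sum>k<T. dist_unif w k)" by (simp only: sum.lessThan_Suc_shift) simp
    finally show ?thesis .
  qed
  have "(\<Sum>u\<in>V. \<bar>Q 0 u w\<bar>) = (\<Sum>u\<in>V. if u = w then 1 else 0)"
    by (intro sum.cong) auto
  then have "(\<Sum>u\<in>V. \<bar>Q 0 u w\<bar>) = 1" using w finite_V by simp
  then have "(\<Sum>u\<in>V. \<bar>Q 0 u w\<bar> + (\<Sum>k<T. \<bar>Q k u w - Q (k - 1) u w\<bar>))
      = 1 + (\<Sum>k<T. \<Sum>u\<in>V. \<bar>Q k u w - Q (k - 1) u w\<bar>)"
    by (simp add: sum.distrib) (rule sum.swap)
  also have "\<dots> \<le> 1 + (\<Sum>k<T. dist_unif w k + dist_unif w (k - 1))"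
    by (intro add_mono sum_mono step) simp
  also have "\<dots> \<le> 3 + 8 * real m"
    using shifted sum_dist_unif_le[OF w half \<open>m \<ge> 1\<close>, of T] dist_unif_0_le[OF w] by (simp add: sum.distrib)
  finally show ?thesis .
qed

lemma chi_minus_mu_le:
  assumes w: "w \<in> V"
    and bounded: "\<And>v u z. v \<in> V \<Longrightarrow> u \<in> V \<Longrightarrow> \<bar>discrepancy \<sigma> v u z\<bar> \<le> B v u"
    and in_bound: "\<And>u. u \<in> V \<Longrightarrow> (\<Sum>v\<in>V. B v u) \<le> K"
    and half: "\<And>y. y \<in> V \<Longrightarrow> dist_unif y m \<le> 1/2" and "m \<ge> 1"
  shows "\<bar>real (chi V \<sigma> \<chi>0 T w) - mu V P \<chi>0 T w\<bar> \<le> K * (3 + 8 * real m)"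
proof -
  define R where "R u = \<bar>Q 0 u w\<bar> + (\<Sum>k<T. \<bar>Q k u w - Q (k - 1) u w\<bar>)" for u
  have "R u \<ge> 0" for u unfolding R_def by (simp add: sum_nonneg)
  have "0 \<le> (\<Sum>v\<in>V. B v w)"
    using bounded w by (intro sum_nonneg) (meson abs_ge_zero order.trans)
  with in_bound[OF w] have "K \<ge> 0" by simp
  have edge: "\<bar>\<Sum>t<T. (discrepancy \<sigma> v u (sent V \<sigma> \<chi>0 (Suc t) v) - discrepancy \<sigma> v u (sent V \<sigma> \<chi>0 t v))
      * Q (T - Suc t) u w\<bar> \<le> B v u * R u" if "v \<in> V" "u \<in> V" for v u
    unfolding R_def
  proof (rule summation_by_parts_abs_le[where d = "\<lambda>t. discrepancy \<sigma> v u (sent V \<sigma> \<chi>0 t v)"])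
    show "discrepancy \<sigma> v u (sent V \<sigma> \<chi>0 0 v) = 0" by (simp add: sent_0 discrepancy_def Icount_def)
  qed (rule bounded[OF that])
  have "\<bar>real (chi V \<sigma> \<chi>0 T w) - mu V P \<chi>0 T w\<bar> \<le> (\<Sum>v\<in>V. \<Sum>u\<in>V. B v u * R u)"
    unfolding chi_minus_mu_eq[OF w]
    by (intro order.trans[OF sum_abs] sum_mono order.trans[OF sum_abs] edge)
  also have "\<dots> = (\<Sum>u\<in>V. (\<Sum>v\<in>V. B v u) * R u)"
    by (subst sum.swap) (simp add: sum_distrib_right)
  also have "\<dots> \<le> (\<Sum>u\<in>V. K * R u)"
    by (intro sum_mono mult_right_mono in_bound \<open>\<And>u. R u \<ge> 0\<close>)
  also have "\<dots> \<le> K * (3 + 8 * real m)"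
    unfolding sum_distrib_left[symmetric] R_def
    by (intro mult_left_mono column_variation_le[OF w half \<open>m \<ge> 1\<close>] \<open>K \<ge> 0\<close>)
  finally show ?thesis .
qed

end

section \<open>The knapsack chain\<close>

lemma sum_01_eq_1_obtain:
  fixes t :: "nat \<Rightarrow> real"
  assumes "\<And>i. i < n \<Longrightarrow> t i = 0 \<or> t i = 1" "(\<Sum>i<n. t i) = 1"
  obtains i where "i < n" "t i = 1" "\<And>j. j < n \<Longrightarrow> j \<noteq> i \<Longrightarrow> t j = 0"
proof -
  have "(\<Sum>i<n. t i) = (\<Sum>i<n. if t i = 1 then 1 else 0)"
    using assms(1) by (intro sum.cong) auto
  also have "\<dots> = real (card {i \<in> {..<n}. t i = 1})"
    by (simp flip: sum.inter_filter)
  finally have "card {i \<in> {..<n}. t i = 1} = 1" using assms(2) by simp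
  then obtain i where ones: "{i \<in> {..<n}. t i = 1} = {i}" by (rule card_1_singletonE)
  then have "i < n" "t i = 1" by auto
  moreover have "t j = 0" if "j < n" "j \<noteq> i" for j
    using assms(1)[OF \<open>j < n\<close>] ones that by auto
  ultimately show ?thesis by (rule that)
qed

locale knapsack =
  fixes n :: nat and a :: "nat \<Rightarrow> nat" and b :: nat
  assumes n_ge_1: "n \<ge> 1"
begin

abbreviation \<Omega> where "\<Omega> \<equiv> kna_space n a b"
abbreviation Nk where "Nk \<equiv> kna_nbr n a b"
abbreviation Pk where "Pk \<equiv> P_kna n a b"

lemma finite_kna_space: "finite \<Omega>"
proof (rule finite_subset)
  show "\<Omega> \<subseteq> {xs. set xs \<subseteq> {0, 1} \<and> length xs = n}" unfolding kna_space_def by auto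
qed (rule finite_lists_length_eq, simp)

lemma kna_nbr_subset: "Nk x \<subseteq> \<Omega>"
  unfolding kna_nbr_def by auto

lemma kna_space_nth: "x \<in> \<Omega> \<Longrightarrow> i < n \<Longrightarrow> x ! i = 0 \<or> x ! i = 1"
  unfolding kna_space_def using nth_mem by fastforce

lemma kna_not_nbr_self: "x \<notin> Nk x"
  unfolding kna_nbr_def by simp

lemma kna_nbr_sym: "x \<in> \<Omega> \<Longrightarrow> y \<in> Nk x \<Longrightarrow> x \<in> Nk y"
  unfolding kna_nbr_def by (auto simp: abs_minus_commute)

lemma kna_nbr_flip:
  assumes x: "x \<in> \<Omega>" and y: "y \<in> Nk x"
  shows "\<exists>i<n. y = x[i := 1 - x ! i]"
proof -
  have y\<Omega>: "y \<in> \<Omega>" using y kna_nbr_subset by auto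
  define t where "t i = \<bar>real (x ! i) - real (y ! i)\<bar>" for i
  have "t i = 0 \<or> t i = 1" if "i < n" for i
    using kna_space_nth[OF x that] kna_space_nth[OF y\<Omega> that] unfolding t_def by auto
  moreover have "(\<Sum>i<n. t i) = 1" using y unfolding kna_nbr_def t_def by simp
  ultimately obtain i where i: "i < n" "t i = 1" and others: "\<And>j. j < n \<Longrightarrow> j \<noteq> i \<Longrightarrow> t j = 0"
    using sum_01_eq_1_obtain[of n t] by blast
  have "length x = n" "length y = n" using x y\<Omega> unfolding kna_space_def by auto
  moreover have "y ! j = x[i := 1 - x ! i] ! j" if "j < n" for j
    using others[OF that] i kna_space_nth[OF x that] kna_space_nth[OF y\<Omega> that] \<open>length x = n\<close>
    unfolding t_def by (cases "j = i") auto
  ultimately show ?thesis using i by (auto intro!: exI[of _ i] nth_equalityI)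
qed

lemma card_kna_nbr_le: "x \<in> \<Omega> \<Longrightarrow> card (Nk x) \<le> n"
proof -
  assume "x \<in> \<Omega>"
  then have "Nk x \<subseteq> (\<lambda>i. x[i := 1 - x ! i]) ` {..<n}" using kna_nbr_flip by blast
  then have "card (Nk x) \<le> card ((\<lambda>i. x[i := 1 - x ! i]) ` {..<n})" by (intro card_mono) auto
  also have "\<dots> \<le> n" using card_image_le[of "{..<n}"] by simp
  finally show ?thesis .
qed

lemma P_kna_off_diag: "u \<noteq> x \<Longrightarrow> Pk x u = (if u \<in> Nk x then 1 / (2 * real n) else 0)"
  unfolding P_kna_def by simp

lemma P_kna_diag: "Pk x x = 1 - real (card (Nk x)) / (2 * real n)"
  unfolding P_kna_def using kna_not_nbr_self by simp

lemma P_kna_diag_ge_half: "x \<in> \<Omega> \<Longrightarrow> Pk x x \<ge> 1/2"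
proof -
  assume "x \<in> \<Omega>"
  then have "real (card (Nk x)) / (2 * real n) \<le> 1/2"
    using card_kna_nbr_le[of x] n_ge_1 by (simp add: field_simps)
  then show ?thesis by (simp add: P_kna_diag)
qed

lemma P_kna_nonneg: "x \<in> \<Omega> \<Longrightarrow> Pk x u \<ge> 0"
  using P_kna_diag_ge_half[of x] by (cases "u = x") (auto simp: P_kna_off_diag)

lemma P_kna_row_sum: "x \<in> \<Omega> \<Longrightarrow> (\<Sum>u\<in>\<Omega>. Pk x u) = 1"
proof -
  assume x: "x \<in> \<Omega>"
  have "(\<Sum>u\<in>\<Omega>. Pk x u) = (\<Sum>u\<in>\<Omega>. (if u \<in> Nk x then 1 / (2 * real n) else 0) + (if u = x then Pk x x else 0))"
    by (intro sum.cong refl) (auto simp: P_kna_off_diag kna_not_nbr_self)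
  also have "\<dots> = (\<Sum>u\<in>\<Omega> \<inter> Nk x. 1 / (2 * real n)) + Pk x x"
    using finite_kna_space x by (simp add: sum.distrib sum.inter_restrict[symmetric])
  also have "\<Omega> \<inter> Nk x = Nk x" using kna_nbr_subset by auto
  finally show ?thesis using n_ge_1 by (simp add: P_kna_diag)
qed

lemma P_kna_sym: "x \<in> \<Omega> \<Longrightarrow> y \<in> \<Omega> \<Longrightarrow> Pk x y = Pk y x"
  using kna_nbr_sym by (cases "x = y") (auto simp: P_kna_off_diag)

lemma nbr_P_kna_subset: "nbr \<Omega> Pk x \<subseteq> insert x (Nk x)"
proof
  fix u assume "u \<in> nbr \<Omega> Pk x"
  then show "u \<in> insert x (Nk x)"
    unfolding nbr_def by (cases "u = x") (auto simp: P_kna_off_diag split: if_splits)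
qed

lemma card_nbr_P_kna_le: "x \<in> \<Omega> \<Longrightarrow> card (nbr \<Omega> Pk x) \<le> n + 1"
proof -
  assume "x \<in> \<Omega>"
  have "card (nbr \<Omega> Pk x) \<le> card (insert x (Nk x))"
    using finite_subset[OF kna_nbr_subset finite_kna_space] by (intro card_mono nbr_P_kna_subset) auto
  also have "\<dots> \<le> Suc (card (Nk x))" by (rule card_insert_le_m1) simp_all
  finally show ?thesis using card_kna_nbr_le[OF \<open>x \<in> \<Omega>\<close>] by simp
qed

end

sublocale knapsack \<subseteq> sym_stochastic "kna_space n a b" "P_kna n a b"
  by unfold_locales (auto simp: finite_kna_space P_kna_nonneg P_kna_row_sum P_kna_sym)

context knapsack
begin

definition zeros :: "nat list" where "zeros = replicate n 0"
definition num_ones :: "nat list \<Rightarrow> nat" where "num_ones y = (\<Sum>i<n. y ! i)"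

lemma zeros_in_kna_space: "zeros \<in> \<Omega>"
  unfolding zeros_def kna_space_def by auto

lemma num_ones_eq_0:
  assumes "y \<in> \<Omega>" "num_ones y = 0" shows "y = zeros"
proof (rule nth_equalityI)
  show "length y = length zeros" using assms(1) unfolding kna_space_def zeros_def by simp
  fix i assume "i < length y"
  then have "i < n" using assms(1) unfolding kna_space_def by simp
  then show "y ! i = zeros ! i" using assms(2) unfolding num_ones_def zeros_def by simp
qed

lemma num_ones_le: "y \<in> \<Omega> \<Longrightarrow> num_ones y \<le> n"
proof -
  assume "y \<in> \<Omega>"
  then have "num_ones y \<le> (\<Sum>i<n. 1)" unfolding num_ones_def using kna_space_nth by (intro sum_mono) fastforce
  then show ?thesis by simp
qed

lemma num_ones_pos_obtain:
  assumes "y \<in> \<Omega>" "num_ones y \<noteq> 0"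
  obtains i where "i < n" "y ! i = 1"
proof -
  have "\<not> (\<forall>i\<in>{..<n}. y ! i = 0)"
    using assms(2) sum.neutral[of "{..<n}" "\<lambda>i. y ! i"] unfolding num_ones_def by metis
  then obtain i where "i < n" "y ! i \<noteq> 0" by blast
  with kna_space_nth[OF assms(1) \<open>i < n\<close>] show ?thesis using that by simp
qed

lemma clear_bit:
  assumes y: "y \<in> \<Omega>" and i: "i < n" "y ! i = 1"
  shows "y[i := 0] \<in> Nk y" and "num_ones (y[i := 0]) = num_ones y - 1"
proof -
  let ?y = "y[i := 0]"
  have len: "length y = n" using y unfolding kna_space_def by simp
  have "(\<Sum>j<n. a j * ?y ! j) \<le> (\<Sum>j<n. a j * y ! j)"
    using len i by (intro sum_mono mult_left_mono) (auto simp: nth_list_update)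
  moreover have "set ?y \<subseteq> {0, 1}"
    using y set_update_subset_insert[of y i 0] unfolding kna_space_def by auto
  ultimately have "?y \<in> \<Omega>" using y len unfolding kna_space_def by auto
  moreover have "(\<Sum>j<n. \<bar>real (y ! j) - real (?y ! j)\<bar>) = (\<Sum>j<n. if j = i then 1 else 0)"
    using i len by (intro sum.cong refl) (auto simp: nth_list_update)
  ultimately show "?y \<in> Nk y" using i unfolding kna_nbr_def by simp
  have "num_ones y = (\<Sum>j<n. ?y ! j + (if j = i then 1 else 0))"
    unfolding num_ones_def using i len by (intro sum.cong refl) (auto simp: nth_list_update)
  then show "num_ones ?y = num_ones y - 1" using i by (simp add: sum.distrib num_ones_def)
qed

lemma mpow_Suc_ge: "y \<in> \<Omega> \<Longrightarrow> x \<in> \<Omega> \<Longrightarrow> Q (Suc k) y zeros \<ge> Pk y x * Q k x zeros"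
  using mpow_Suc_left[OF finite_kna_space _ zeros_in_kna_space, of y]
    member_le_sum[of x \<Omega> "\<lambda>x. Pk y x * Q k x zeros"] finite_kna_space
  by (simp add: P_kna_nonneg mpow_nonneg zeros_in_kna_space)

text \<open>Clear one nonzero bit per step; once at \<open>zeros\<close>, stay there.\<close>

lemma mpow_to_zeros_ge:
  "y \<in> \<Omega> \<Longrightarrow> num_ones y \<le> k \<Longrightarrow> Q k y zeros \<ge> (1 / (2 * real n)) ^ k"
proof (induction k arbitrary: y)
  case 0
  then show ?case using num_ones_eq_0 by simp
next
  case (Suc k)
  have p_le: "1 / (2 * real n) \<le> 1/2" using n_ge_1 by (simp add: field_simps)
  show ?case
  proof (cases "num_ones y = 0")
    case True
    then have "y = zeros" using num_ones_eq_0 Suc.prems by simp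
    have "1 / (2 * real n) \<le> Pk zeros zeros"
      using P_kna_diag_ge_half[OF zeros_in_kna_space] p_le by linarith
    then have "(1 / (2 * real n)) ^ Suc k \<le> Pk zeros zeros * (1 / (2 * real n)) ^ k"
      unfolding power_Suc by (rule mult_right_mono) simp
    also have "\<dots> \<le> Pk zeros zeros * Q k zeros zeros"
      using Suc.IH[OF zeros_in_kna_space] True \<open>y = zeros\<close> P_kna_nonneg[OF zeros_in_kna_space]
      by (intro mult_left_mono) auto
    also have "\<dots> \<le> Q (Suc k) y zeros" using mpow_Suc_ge zeros_in_kna_space \<open>y = zeros\<close> by simp
    finally show ?thesis .
  next
    case False
    then obtain i where "i < n" "y ! i = 1" using num_ones_pos_obtain Suc.prems(1) by blast
    note cleared = clear_bit[OF Suc.prems(1) this]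
    let ?y = "y[i := 0]"
    have "?y \<in> \<Omega>" using kna_nbr_subset cleared(1) by (rule subsetD)
    have "length y = n" using Suc.prems(1) unfolding kna_space_def by simp
    then have "?y ! i = 0" using \<open>i < n\<close> by simp
    then have "?y \<noteq> y" using \<open>y ! i = 1\<close> by auto
    then have step: "Pk y ?y = 1 / (2 * real n)" using cleared(1) by (simp add: P_kna_off_diag)
    have "num_ones ?y \<le> k" using cleared(2) Suc.prems(2) by simp
    then have "(1 / (2 * real n)) ^ k \<le> Q k ?y zeros" by (rule Suc.IH[OF \<open>?y \<in> \<Omega>\<close>])
    then have "(1 / (2 * real n)) ^ Suc k \<le> Pk y ?y * Q k ?y zeros"
      unfolding step power_Suc by (rule mult_left_mono) simp
    also have "\<dots> \<le> Q (Suc k) y zeros" by (rule mpow_Suc_ge[OF Suc.prems(1) \<open>?y \<in> \<Omega>\<close>])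
    finally show ?thesis .
  qed
qed

lemma kna_dist_unif_at_mixing_time:
  "y \<in> \<Omega> \<Longrightarrow> dist_unif y (mixing_time \<Omega> Pk (\<lambda>_. unif) (1/4) + 1) \<le> 1/2"
proof -
  assume y: "y \<in> \<Omega>"
  have "\<exists>t. dist_unif x t \<le> 1/2" if "x \<in> \<Omega>" for x
  proof (rule dist_unif_eventually_le_half[OF zeros_in_kna_space _ _ that])
    show "0 < (1 / (2 * real n)) ^ n" using n_ge_1 by simp
  qed (rule mpow_to_zeros_ge[OF _ num_ones_le])
  then show ?thesis
    using dist_unif_mixing_time_le[OF _ y] dist_unif_antimono[OF y] by (meson le_add1 order.trans)
qed

lemma kna_discrepancy_le:
  assumes router: "is_srt_router \<Omega> Pk \<sigma> \<or> is_billiard_router \<Omega> Pk \<sigma>" and v: "v \<in> \<Omega>" and "u \<in> \<Omega>"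
  shows "\<bar>discrepancy \<sigma> v u z\<bar> \<le> (if u \<in> nbr \<Omega> Pk v then 1 + real (card (nbr \<Omega> Pk v)) * Pk v u else 0)"
proof -
  interpret router_row \<Omega> Pk \<sigma> v
    by unfold_locales (auto simp: finite_kna_space P_kna_nonneg P_kna_row_sum v router_in_nbr[OF router v])
  show ?thesis
  proof (cases "u \<in> N")
    case True
    then show ?thesis using router_discrepancy_le[OF router v True] by (simp add: discrepancy_def)
  next
    case False
    then have "Pk v u = 0" using P_kna_nonneg[OF v, of u] \<open>u \<in> \<Omega>\<close> unfolding nbr_def by auto
    then show ?thesis using count_not_nbr[OF False] False by (simp add: discrepancy_def)
  qed
qed

text \<open>The in-neighbours of \<open>u\<close> are \<open>u\<close> itself and its at most \<open>n\<close> Hamming neighbours,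
  each with \<open>P = 1/(2n)\<close> and at most \<open>n + 1\<close> out-neighbours.\<close>

lemma kna_discrepancy_bound_sum_le:
  assumes u: "u \<in> \<Omega>"
  shows "(\<Sum>v\<in>\<Omega>. if u \<in> nbr \<Omega> Pk v then 1 + real (card (nbr \<Omega> Pk v)) * Pk v u else 0) \<le> real (3 * n + 2)"
proof -
  define B where "B v = (if u \<in> nbr \<Omega> Pk v then 1 + real (card (nbr \<Omega> Pk v)) * Pk v u else 0)" for v
  have "real (card (nbr \<Omega> Pk u)) * Pk u u \<le> real (n + 1) * 1"
    using card_nbr_P_kna_le[OF u] P_kna_nonneg[OF u, of u] by (intro mult_mono) (auto simp: P_kna_diag)
  then have self: "B u \<le> real n + 2" unfolding B_def by simp
  have others: "B v \<le> (if v \<in> Nk u then 2 else 0)" if v: "v \<in> \<Omega>" "v \<noteq> u" for v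
  proof (cases "u \<in> nbr \<Omega> Pk v")
    case True
    then have "u \<in> Nk v" using nbr_P_kna_subset[of v] v by auto
    then have "v \<in> Nk u" using kna_nbr_sym v by blast
    have P: "Pk v u = 1 / (2 * real n)" using \<open>u \<in> Nk v\<close> v by (simp add: P_kna_off_diag)
    have "real (card (nbr \<Omega> Pk v)) * (1 / (2 * real n)) \<le> real (n + 1) * (1 / (2 * real n))"
      using card_nbr_P_kna_le[OF v(1)] by (intro mult_right_mono) auto
    also have "\<dots> \<le> 1" using n_ge_1 by (simp add: field_simps)
    finally show ?thesis using True P \<open>v \<in> Nk u\<close> unfolding B_def by simp
  qed (simp add: B_def)
  have "(\<Sum>v\<in>\<Omega> - {u}. B v) \<le> (\<Sum>v\<in>\<Omega> - {u}. if v \<in> Nk u then 2 else 0)"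
    using others by (intro sum_mono) auto
  also have "\<dots> \<le> (\<Sum>v\<in>\<Omega>. if v \<in> Nk u then 2 else 0)"
    using finite_kna_space by (intro sum_mono2) auto
  also have "\<dots> = (\<Sum>v\<in>Nk u. 2::real)"
    using kna_nbr_subset by (simp add: sum.inter_restrict[OF finite_kna_space, symmetric] Int_absorb1)
  also have "\<dots> \<le> 2 * real n" using card_kna_nbr_le[OF u] by simp
  finally have "(\<Sum>v\<in>\<Omega> - {u}. B v) \<le> 2 * real n" .
  moreover have "(\<Sum>v\<in>\<Omega>. B v) = B u + (\<Sum>v\<in>\<Omega> - {u}. B v)"
    using finite_kna_space u by (simp add: sum.remove)
  ultimately have "(\<Sum>v\<in>\<Omega>. B v) \<le> real (3 * n + 2)" using self by simp
  then show ?thesis unfolding B_def .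
qed

lemma kna_chi_minus_mu_le:
  assumes "is_srt_router \<Omega> Pk \<sigma> \<or> is_billiard_router \<Omega> Pk \<sigma>" "w \<in> \<Omega>"
  shows "\<bar>real (chi \<Omega> \<sigma> \<chi>0 T w) - mu \<Omega> Pk \<chi>0 T w\<bar>
    \<le> real (3 * n + 2) * (11 + 8 * real (mixing_time \<Omega> Pk (\<lambda>_. 1 / real (card \<Omega>)) (1/4)))"
  using chi_minus_mu_le[OF \<open>w \<in> \<Omega>\<close> kna_discrepancy_le[OF assms(1)] kna_discrepancy_bound_sum_le
      kna_dist_unif_at_mixing_time]
  by (simp add: unif_def algebra_simps)

end

lemma linear_times_powr_le:
  fixes \<alpha> C \<tau> :: real
  assumes "n \<ge> 1" "\<alpha> > 0" "0 \<le> \<tau>" "\<tau> \<le> C * real n powr (9/2 + \<alpha>)"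
  shows "real (3 * n + 2) * (11 + 8 * \<tau>) \<le> (55 + 40 * C) * real n powr (11/2 + \<alpha>)"
proof -
  have n: "real n \<ge> 1" using assms(1) by simp
  have "0 \<le> C * real n powr (9/2 + \<alpha>)" using assms(3,4) by linarith
  then have "C \<ge> 0" using n by (simp add: zero_le_mult_iff)
  have "real (3 * n + 2) * (11 + 8 * \<tau>) \<le> 5 * real n * (11 + 8 * (C * real n powr (9/2 + \<alpha>)))"
    using n assms(3,4) by (intro mult_mono) auto
  also have "\<dots> = 55 * real n + 40 * C * (real n * real n powr (9/2 + \<alpha>))"
    by (simp add: algebra_simps)
  also have "real n * real n powr (9/2 + \<alpha>) = real n powr (11/2 + \<alpha>)"
    using n by (simp add: powr_mult_base)
  finally have "real (3 * n + 2) * (11 + 8 * \<tau>) \<le> 55 * real n + 40 * C * real n powr (11/2 + \<alpha>)" .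
  moreover have "real n \<le> real n powr (11/2 + \<alpha>)"
    using n assms(2) powr_mono[of 1 "11/2 + \<alpha>" "real n"] by simp
  ultimately show ?thesis by (simp add: algebra_simps)
qed

lemma kna_chi_minus_mu_le_powr:
  assumes "\<alpha> > 0" "n \<ge> 1"
    and mixing: "real (mixing_time (kna_space n a b) (P_kna n a b) (\<lambda>_. 1 / real (card (kna_space n a b))) (1/4))
      \<le> C * real n powr (9/2 + \<alpha>)"
    and "is_srt_router (kna_space n a b) (P_kna n a b) \<sigma> \<or> is_billiard_router (kna_space n a b) (P_kna n a b) \<sigma>"
    and "w \<in> kna_space n a b"
  shows "\<bar>real (chi (kna_space n a b) \<sigma> \<chi>0 T w) - mu (kna_space n a b) (P_kna n a b) \<chi>0 T w\<bar>
    \<le> (55 + 40 * C) * real n powr (11/2 + \<alpha>)"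
proof -
  interpret knapsack n a b using \<open>n \<ge> 1\<close> by unfold_locales
  have "0 \<le> real (mixing_time \<Omega> Pk (\<lambda>_. 1 / real (card \<Omega>)) (1/4))" by simp
  from kna_chi_minus_mu_le[OF assms(4,5)] linear_times_powr_le[OF \<open>n \<ge> 1\<close> \<open>\<alpha> > 0\<close> this mixing]
  show ?thesis by (rule order.trans)
qed

theorem theorem6p2:
  assumes MorrisSinclair:
    "\<forall>\<alpha>::real. \<alpha> > 0 \<longrightarrow> (\<exists>C::real. \<forall>(n::nat) (a::nat \<Rightarrow> nat) (b::nat).
        n \<ge> 1 \<and> (\<forall>i<n. a i > 0) \<and> b > 0 \<longrightarrow>
        real (mixing_time (kna_space n a b) (P_kna n a b)
                (\<lambda>_. 1 / real (card (kna_space n a b))) (1/4))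
          \<le> C * real n powr (9/2 + \<alpha>))"
  shows
    "\<forall>\<alpha>::real. \<alpha> > 0 \<longrightarrow> (\<exists>C'::real. \<forall>(n::nat) (a::nat \<Rightarrow> nat) (b::nat)
        (\<sigma>::nat list \<Rightarrow> nat \<Rightarrow> nat list) (\<chi>0::nat list \<Rightarrow> nat).
        n \<ge> 1 \<and> (\<forall>i<n. a i > 0) \<and> b > 0 \<and>
        (is_srt_router (kna_space n a b) (P_kna n a b) \<sigma> \<or>
         is_billiard_router (kna_space n a b) (P_kna n a b) \<sigma>) \<longrightarrow>
        (\<forall>w\<in>kna_space n a b. \<forall>T::nat.
           \<bar>real (chi (kna_space n a b) \<sigma> \<chi>0 T w) - mu (kna_space n a b) (P_kna n a b) \<chi>0 T w\<bar>
             \<le> C' * real n powr (11/2 + \<alpha>)))"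
  using MorrisSinclair kna_chi_minus_mu_le_powr by metis

end
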